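(* Assume $V=L$. Let $\theta\in\Xi$, $X\in\mathrm{IPS}_\theta$, and let $F:D^\theta\to\mathcal N$ be continuous. Then there is $Y\in\mathrm{IPS}_\theta$ with $Y\subseteq X$ such that one of the following holds: (i) for every $i\in\theta$, $F(y)\notin Y{\Downarrow}i$ for all $y\in Y$; (ii) there is $j\in\theta$ such that $F(y)=y(j)$ for all $y\in Y$, and for every $i\in\theta$ with $i\neq j$, $F(y)\notin Y{\Downarrow}i$ for all $y\in Y$.
   Context: $\mathcal N=\omega^\omega$ is the Baire space, $D=2^\omega\subseteq\mathcal N$ the Cantor space. $T$ is the set of all nonempty finite sequences of countable ordinals, ordered by strict extension $\subset$. $\Xi$ is the set of all at most countable $\xi\subseteq T$ closed downward under $\subset$. $D^\xi$ is the product of $\xi$ copies of $D$ with the product topology; for $\eta\subseteq\xi$ and $x\in D^\xi$, $x\restriction\eta$ is the restriction. For $\zeta\in\Xi$, $\mathrm{IPS}_\zeta$ is the set of all $X\subseteq D^\zeta$ for which there is a homeomorphism $H$ of $D^\zeta$ onto $X$ such that for all $x_0,x_1\in D^\zeta$ and all $\xi\in\Xi$, $\xi\subseteq\zeta$: $x_0\restriction\xi=x_1\restriction\xi\iff H(x_0)\restriction\xi=H(x_1)\restriction\xi$. For $Y\subseteq D^\theta$ and $i\in\theta$, $Y{\Downarrow}i=\{y(i):y\in Y\}$. *)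

theory Defs
  imports "HOL-Analysis.Analysis"
begin

(* Countable ordinals: the field of the successor cardinal of omega, i.e. the
   canonical well-order of type omega_1 (cardSuc natLeq). *)
typedef ord1 = "Field (cardSuc natLeq)"
proof -
  have "Cinfinite (cardSuc natLeq)"
    using Cinfinite_cardSuc natLeq_Card_order natLeq_cinfinite by blast
  then have "infinite (Field (cardSuc natLeq))"
    by (simp add: BNF_Cardinal_Arithmetic.cinfinite_def)
  then show ?thesis by (metis ex_in_conv finite.emptyI)
qed

(* Baire space N = nat => nat (euclidean = product of discrete nat); Cantor space D *)
definition Cantor :: "(nat \<Rightarrow> nat) set" where
  "Cantor = {f. \<forall>n. f n \<in> {0, 1}}"

definition Tseq :: "ord1 list set" where
  "Tseq = {s. s \<noteq> []}"

definition strict_ext :: "ord1 list \<Rightarrow> ord1 list \<Rightarrow> bool" where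
  "strict_ext s t \<longleftrightarrow> (\<exists>u. u \<noteq> [] \<and> t = s @ u)"

definition Xi :: "ord1 list set set" where
  "Xi = {\<xi>. \<xi> \<subseteq> Tseq \<and> countable \<xi> \<and>
              (\<forall>t\<in>\<xi>. \<forall>s\<in>Tseq. strict_ext s t \<longrightarrow> s \<in> \<xi>)}"

(* D^xi with the product topology; points are extensional functions on xi *)
definition Dpow :: "ord1 list set \<Rightarrow> (ord1 list \<Rightarrow> nat \<Rightarrow> nat) topology" where
  "Dpow \<xi> = product_topology (\<lambda>_. subtopology euclidean Cantor) \<xi>"

definition IPS :: "ord1 list set \<Rightarrow> (ord1 list \<Rightarrow> nat \<Rightarrow> nat) set set" where
  "IPS \<zeta> = {X. X \<subseteq> topspace (Dpow \<zeta>) \<and>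
     (\<exists>H. homeomorphic_map (Dpow \<zeta>) (subtopology (Dpow \<zeta>) X) H \<and>
       (\<forall>x0\<in>topspace (Dpow \<zeta>). \<forall>x1\<in>topspace (Dpow \<zeta>). \<forall>\<xi>\<in>Xi. \<xi> \<subseteq> \<zeta> \<longrightarrow>
          (restrict x0 \<xi> = restrict x1 \<xi> \<longleftrightarrow> restrict (H x0) \<xi> = restrict (H x1) \<xi>)))}"

definition proj_at :: "(ord1 list \<Rightarrow> nat \<Rightarrow> nat) set \<Rightarrow> ord1 list \<Rightarrow> (nat \<Rightarrow> nat) set" where
  "proj_at Y i = (\<lambda>y. y i) ` Y"

end

theory Submission
  imports Defs
begin

text \<open>
  Let H parametrize X. Because H preserves restrictions to downward closed sets of nodes, the
  coordinate H x i depends only on the part of x below i and reacts to every change of x i; hence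
  distinct coordinates of H are nowhere locally equal. So either F \<circ> H agrees with a coordinate
  x \<mapsto> H x j on a nonempty open set U, or F \<circ> H is nowhere locally equal to every coordinate.
  Let \<Phi> be x \<mapsto> H x j in the first case and F \<circ> H in the second. It suffices to find a
  continuous, restriction preserving embedding K of the Cantor cube into U such that
  \<Phi> (K z) \<noteq> H (K w) i for all z, w and all relevant i; then Y = H[K[D^\<theta>]] works.

  K is obtained by fusion. Enumerate \<theta>; a stage fixes finitely many bits of K z, reading only
  finitely many bits of z below each node. At stage n, for the n-th node i, any two of the
  finitely many cylinder types are separated: a pair x, y with \<Phi> x \<noteq> H y i is found in the
  two cylinders, and by continuity of \<Phi> and H enough bits of x and y are frozen. Then the first
  n bits of the first n nodes are copied into K z, which makes the limit map invertible.
\<close>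

type_synonym pt = "ord1 list \<Rightarrow> nat \<Rightarrow> nat"

abbreviation pts :: "ord1 list set \<Rightarrow> pt set" where
  "pts \<theta> \<equiv> topspace (Dpow \<theta>)"

section \<open>Downward closures in the tree\<close>

definition down :: "ord1 list \<Rightarrow> ord1 list set" where
  "down t = {s. s \<noteq> [] \<and> (\<exists>u. t = s @ u)}"

lemma down_self: "t \<noteq> [] \<Longrightarrow> t \<in> down t"
  by (auto simp: down_def)

lemma down_trans: "s \<in> down t \<Longrightarrow> down s \<subseteq> down t"
  by (auto simp: down_def)

lemma down_antisym: "s \<in> down t \<Longrightarrow> t \<in> down s \<Longrightarrow> s = t"
  by (auto simp: down_def)

lemma finite_down: "finite (down t)"
proof -
  have "down t \<subseteq> (\<lambda>k. take k t) ` {..length t}"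
  proof
    fix s assume "s \<in> down t"
    then obtain u where "t = s @ u"
      by (auto simp: down_def)
    then show "s \<in> (\<lambda>k. take k t) ` {..length t}"
      by (intro image_eqI[of _ _ "length s"]) auto
  qed
  then show ?thesis
    by (rule finite_subset) auto
qed

lemma down_in_Xi: "t \<noteq> [] \<Longrightarrow> down t \<in> Xi"
  using countable_finite[OF finite_down, of t]
  by (auto simp: Xi_def down_def Tseq_def strict_ext_def)

lemma down_minus_self_in_Xi: "t \<noteq> [] \<Longrightarrow> down t - {t} \<in> Xi"
  unfolding Xi_def
proof (intro CollectI conjI ballI impI)
  show "down t - {t} \<subseteq> Tseq"
    by (auto simp: down_def Tseq_def)
  show "countable (down t - {t})"
    by (simp add: countable_finite finite_down)
  fix s r assume s: "s \<in> down t - {t}" and r: "r \<in> Tseq" "strict_ext r s"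
  from s obtain u where u: "t = s @ u"
    by (auto simp: down_def)
  from r obtain v where v: "s = r @ v" "v \<noteq> []" "r \<noteq> []"
    by (auto simp: Tseq_def strict_ext_def)
  have "length r < length t"
    using u v by simp
  then show "r \<in> down t - {t}"
    using u v by (auto simp: down_def)
qed

lemma Xi_neq_Nil: "\<theta> \<in> Xi \<Longrightarrow> t \<in> \<theta> \<Longrightarrow> t \<noteq> []"
  by (auto simp: Xi_def Tseq_def)

lemma down_subset_Xi:
  assumes "\<theta> \<in> Xi" "t \<in> \<theta>"
  shows "down t \<subseteq> \<theta>"
proof
  fix s assume "s \<in> down t"
  then obtain u where "t = s @ u" "s \<noteq> []"
    by (auto simp: down_def)
  then show "s \<in> \<theta>"
    using assms by (cases "u = []") (auto simp: Xi_def Tseq_def strict_ext_def)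
qed

section \<open>The product topology on Cantor cubes\<close>

lemma topspace_Dpow: "pts \<theta> = (\<Pi>\<^sub>E t\<in>\<theta>. Cantor)"
  by (simp add: Dpow_def)

lemma mem_pts_iff:
  "x \<in> pts \<theta> \<longleftrightarrow> (\<forall>t\<in>\<theta>. \<forall>q. x t q \<in> {0, 1}) \<and> (\<forall>t. t \<notin> \<theta> \<longrightarrow> x t = undefined)"
  by (auto simp: topspace_Dpow PiE_iff extensional_def Cantor_def)

lemma pts_bit: "x \<in> pts \<theta> \<Longrightarrow> t \<in> \<theta> \<Longrightarrow> x t q \<in> {0, 1}"
  by (simp add: mem_pts_iff)

lemma continuous_map_Dpow_proj: "t \<in> \<theta> \<Longrightarrow> continuous_map (Dpow \<theta>) euclidean (\<lambda>y. y t)"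
  unfolding Dpow_def
  by (metis continuous_map_in_subtopology continuous_map_product_projection)

lemma continuous_map_Dpow_bit: "t \<in> \<theta> \<Longrightarrow> continuous_map (Dpow \<theta>) euclidean (\<lambda>y. y t q)"
  using continuous_map_Dpow_proj[of t \<theta>]
  by (simp add: euclidean_product_topology[symmetric] continuous_map_componentwise_UNIV)

lemma openin_Dpow_bit_eq: "openin (Dpow \<theta>) {y \<in> pts \<theta>. y t q = v}"
proof (cases "t \<in> \<theta>")
  case True
  have "openin (Dpow \<theta>) {y \<in> pts \<theta>. y t q \<in> {v}}"
    by (rule openin_continuous_map_preimage[OF continuous_map_Dpow_bit[OF True]])
      (simp add: open_discrete)
  then show ?thesis
    by simp
next
  case False
  then have "\<forall>y\<in>pts \<theta>. y t = undefined"
    by (simp add: mem_pts_iff)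
  then have "{y \<in> pts \<theta>. y t q = v} = {} \<or> {y \<in> pts \<theta>. y t q = v} = pts \<theta>"
    by auto
  then show ?thesis
    by (metis (no_types, lifting) openin_empty openin_topspace)
qed

lemma openin_Dpow_cylinder:
  "finite E \<Longrightarrow> openin (Dpow \<theta>) {y \<in> pts \<theta>. \<forall>e\<in>E. y (fst e) (snd e) = c e}"
proof (induction E rule: finite_induct)
  case (insert e E)
  have "{y \<in> pts \<theta>. \<forall>e'\<in>insert e E. y (fst e') (snd e') = c e'} =
      {y \<in> pts \<theta>. y (fst e) (snd e) = c e} \<inter> {y \<in> pts \<theta>. \<forall>e\<in>E. y (fst e) (snd e) = c e}"
    by auto
  then show ?case
    using openin_Int[OF openin_Dpow_bit_eq insert.IH] by simp
qed simp

lemma continuous_map_locally_constant: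
  assumes "\<And>z. z \<in> topspace X \<Longrightarrow> \<exists>U. openin X U \<and> z \<in> U \<and> (\<forall>y\<in>U. f y = f z)"
  shows "continuous_map X (euclidean :: 'b::topological_space topology) f"
proof -
  have "openin X {x \<in> topspace X. f x \<in> V}" for V :: "'b set"
  proof (rule iffD2[OF openin_subopen], rule ballI)
    fix z assume "z \<in> {x \<in> topspace X. f x \<in> V}"
    then have z: "z \<in> topspace X" "f z \<in> V"
      by auto
    obtain U where U: "openin X U" "z \<in> U" "\<And>y. y \<in> U \<Longrightarrow> f y = f z"
      using assms[OF z(1)] by blast
    have "U \<subseteq> {x \<in> topspace X. f x \<in> V}"
      using openin_subset[OF U(1)] U(3) z(2) by auto
    then show "\<exists>T. openin X T \<and> z \<in> T \<and> T \<subseteq> {x \<in> topspace X. f x \<in> V}"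
      using U(1,2) by blast
  qed
  then show ?thesis
    by (simp add: continuous_map_def)
qed

lemma open_fun_nat_cylinder:
  assumes "open (U :: (nat \<Rightarrow> nat) set)" "f \<in> U"
  obtains L where "\<And>g. \<forall>q<L. g q = f q \<Longrightarrow> g \<in> U"
proof -
  have "openin (product_topology (\<lambda>_. euclidean) UNIV) U"
    using assms(1) by (simp add: open_fun_def)
  then obtain V where V: "finite {i \<in> UNIV. V i \<noteq> topspace euclidean}"
      "f \<in> Pi\<^sub>E UNIV V" "Pi\<^sub>E UNIV V \<subseteq> U"
    using assms(2) unfolding openin_product_topology_alt by blast
  obtain L where L: "{i \<in> UNIV. V i \<noteq> topspace euclidean} \<subseteq> {..<L}"
    using finite_nat_bounded[OF V(1)] by blast
  have "g \<in> Pi\<^sub>E UNIV V" if g: "\<forall>q<L. g q = f q" for g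
  proof -
    have "g i \<in> V i" for i
      using g L V(2) by (cases "i < L") (auto simp: PiE_iff)
    then show ?thesis
      by (simp add: PiE_iff)
  qed
  then show ?thesis
    using that V(3) by blast
qed

lemma openin_Cantor_cylinder:
  assumes "openin (top_of_set Cantor) V" "f \<in> V"
  shows "\<exists>L. \<forall>g\<in>Cantor. (\<forall>q<L. g q = f q) \<longrightarrow> g \<in> V"
proof -
  obtain W where W: "open W" "V = W \<inter> Cantor"
    using assms(1) unfolding openin_subtopology by auto
  then obtain L where "\<And>g. \<forall>q<L. g q = f q \<Longrightarrow> g \<in> W"
    using open_fun_nat_cylinder[OF W(1)] assms(2) by blast
  then show ?thesis
    using W(2) by blast
qed

lemma openin_Dpow_cylinder_nbhd:
  assumes "openin (Dpow \<theta>) U" "x \<in> U"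
  shows "\<exists>C L. finite C \<and> C \<subseteq> \<theta> \<and> (\<forall>y\<in>pts \<theta>. (\<forall>t\<in>C. \<forall>q<L. y t q = x t q) \<longrightarrow> y \<in> U)"
proof -
  obtain V where V: "finite {i \<in> \<theta>. V i \<noteq> topspace (top_of_set Cantor)}"
    "\<forall>i\<in>\<theta>. openin (top_of_set Cantor) (V i)" "x \<in> Pi\<^sub>E \<theta> V" "Pi\<^sub>E \<theta> V \<subseteq> U"
  proof -
    have "openin (product_topology (\<lambda>_. top_of_set Cantor) \<theta>) U"
      using assms(1) by (simp add: Dpow_def)
    then have "\<forall>x\<in>U. \<exists>V. finite {i \<in> \<theta>. V i \<noteq> topspace (top_of_set Cantor)} \<and>
        (\<forall>i\<in>\<theta>. openin (top_of_set Cantor) (V i)) \<and> x \<in> Pi\<^sub>E \<theta> V \<and> Pi\<^sub>E \<theta> V \<subseteq> U"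
      by (simp only: openin_product_topology_alt)
    then show ?thesis
      using assms(2) that by blast
  qed
  define C where "C = {i \<in> \<theta>. V i \<noteq> Cantor}"
  have "\<forall>i\<in>C. \<exists>L. \<forall>g\<in>Cantor. (\<forall>q<L. g q = x i q) \<longrightarrow> g \<in> V i"
    using V(2,3) openin_Cantor_cylinder by (auto simp: C_def PiE_iff)
  then obtain Lf where Lf: "\<forall>i\<in>C. \<forall>g\<in>Cantor. (\<forall>q<Lf i. g q = x i q) \<longrightarrow> g \<in> V i"
    by (metis bchoice)
  have fin: "finite C"
    using V(1) by (simp add: C_def)
  have "y \<in> U" if y: "y \<in> pts \<theta>" "\<forall>t\<in>C. \<forall>q<(\<Sum>i\<in>C. Lf i). y t q = x t q" for y
  proof -
    have "y i \<in> V i" if "i \<in> \<theta>" for i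
    proof -
      have "y i \<in> Cantor"
        using y(1) \<open>i \<in> \<theta>\<close> by (simp add: topspace_Dpow PiE_iff)
      moreover have "\<forall>q<Lf i. y i q = x i q" if "i \<in> C"
        using y(2) that member_le_sum[OF that _ fin, of Lf] by fastforce
      ultimately show ?thesis
        using Lf \<open>i \<in> \<theta>\<close> by (cases "i \<in> C") (auto simp: C_def)
    qed
    then have "y \<in> Pi\<^sub>E \<theta> V"
      using y(1) by (simp add: topspace_Dpow PiE_iff)
    then show ?thesis
      using V(4) by blast
  qed
  moreover have "C \<subseteq> \<theta>"
    by (simp add: C_def)
  ultimately show ?thesis
    using fin by blast
qed

lemma continuous_map_bit_nbhd:
  assumes "continuous_map (Dpow \<theta>) euclidean (\<Phi> :: pt \<Rightarrow> nat \<Rightarrow> nat)" "x \<in> pts \<theta>"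
  shows "\<exists>C L. finite C \<and> C \<subseteq> \<theta> \<and>
    (\<forall>y\<in>pts \<theta>. (\<forall>t\<in>C. \<forall>q<L. y t q = x t q) \<longrightarrow> \<Phi> y k = \<Phi> x k)"
proof -
  have "continuous_map (Dpow \<theta>) euclidean (\<lambda>y. \<Phi> y k)"
    using assms(1)
    by (simp add: euclidean_product_topology[symmetric] continuous_map_componentwise_UNIV)
  then have "openin (Dpow \<theta>) {y \<in> pts \<theta>. \<Phi> y k \<in> {\<Phi> x k}}"
    by (rule openin_continuous_map_preimage) (simp add: open_discrete)
  from openin_Dpow_cylinder_nbhd[OF this] assms(2) show ?thesis
    by auto
qed

lemma continuous_map_into_Dpow:
  assumes "\<And>x. x \<in> topspace X \<Longrightarrow> f x \<in> extensional \<theta>"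
    and "\<And>t. t \<in> \<theta> \<Longrightarrow> continuous_map X euclidean (\<lambda>x. f x t)"
    and "\<And>x t. x \<in> topspace X \<Longrightarrow> t \<in> \<theta> \<Longrightarrow> f x t \<in> Cantor"
  shows "continuous_map X (Dpow \<theta>) f"
  unfolding Dpow_def continuous_map_componentwise
proof (intro conjI ballI)
  show "f ` topspace X \<subseteq> extensional \<theta>"
    using assms(1) by blast
  fix t assume "t \<in> \<theta>"
  then show "continuous_map X (top_of_set Cantor) (\<lambda>x. f x t)"
    unfolding continuous_map_in_subtopology using assms(2,3) by blast
qed

definition flip_bit :: "pt \<Rightarrow> ord1 list \<Rightarrow> nat \<Rightarrow> pt" where
  "flip_bit x t L = x(t := (x t)(L := 1 - x t L))"

lemma flip_bit_in_pts: "x \<in> pts \<theta> \<Longrightarrow> t \<in> \<theta> \<Longrightarrow> flip_bit x t L \<in> pts \<theta>"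
  unfolding mem_pts_iff flip_bit_def by auto

lemma flip_bit_neq:
  assumes "x \<in> pts \<theta>" "t \<in> \<theta>"
  shows "flip_bit x t L t \<noteq> x t"
proof -
  have "x t L \<in> {0, 1}"
    using assms by (simp add: mem_pts_iff)
  then show ?thesis
    unfolding flip_bit_def by (auto dest: fun_cong[where x = L])
qed

lemma flip_bit_other: "s \<noteq> t \<Longrightarrow> flip_bit x t L s = x s"
  unfolding flip_bit_def by simp

lemma flip_bit_below: "q < L \<Longrightarrow> flip_bit x t L t q = x t q"
  unfolding flip_bit_def by simp

definition preserves_restrictions :: "ord1 list set \<Rightarrow> (pt \<Rightarrow> pt) \<Rightarrow> bool" where
  "preserves_restrictions \<theta> K \<longleftrightarrow> (\<forall>x0\<in>pts \<theta>. \<forall>x1\<in>pts \<theta>. \<forall>\<xi>\<in>Xi. \<xi> \<subseteq> \<theta> \<longrightarrow>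
     (restrict x0 \<xi> = restrict x1 \<xi> \<longleftrightarrow> restrict (K x0) \<xi> = restrict (K x1) \<xi>))"

lemma IPS_iff:
  "X \<in> IPS \<theta> \<longleftrightarrow> X \<subseteq> pts \<theta> \<and>
     (\<exists>H. homeomorphic_map (Dpow \<theta>) (subtopology (Dpow \<theta>) X) H \<and> preserves_restrictions \<theta> H)"
  by (simp only: IPS_def preserves_restrictions_def mem_Collect_eq)

definition nowhere_locally_eq :: "ord1 list set \<Rightarrow> (pt \<Rightarrow> 'a) \<Rightarrow> (pt \<Rightarrow> 'a) \<Rightarrow> bool" where
  "nowhere_locally_eq \<theta> f g \<longleftrightarrow> (\<forall>U. openin (Dpow \<theta>) U \<longrightarrow> U \<noteq> {} \<longrightarrow> (\<exists>x\<in>U. f x \<noteq> g x))"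

definition IPS_embedding :: "ord1 list set \<Rightarrow> (pt \<Rightarrow> pt) \<Rightarrow> bool" where
  "IPS_embedding \<theta> K \<longleftrightarrow> section_map (Dpow \<theta>) (Dpow \<theta>) K \<and> preserves_restrictions \<theta> K"

lemma IPS_embedding_id: "IPS_embedding \<theta> id"
  unfolding IPS_embedding_def section_map_def retraction_maps_def preserves_restrictions_def
  by (auto intro: exI[of _ id])

section \<open>Finite stages of a fusion construction\<close>

type_synonym stage = "pt \<Rightarrow> ord1 list \<Rightarrow> nat list"

definition agree :: "(ord1 list \<times> nat) set \<Rightarrow> pt \<Rightarrow> pt \<Rightarrow> ord1 list \<Rightarrow> bool" where
  "agree R z w t \<longleftrightarrow> (\<forall>s\<in>down t. \<forall>m. (s, m) \<in> R \<longrightarrow> z s m = w s m)"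

text \<open>A stage W fixes the initial segment W z t of coordinate t of the point that the limit map
  will assign to z. It may read only the bits R of z at nodes below t, and it copies each of these
  bits to a position that does not depend on z, so that z can be decoded continuously from its
  image.\<close>

definition approx :: "ord1 list set \<Rightarrow> (ord1 list \<times> nat) set \<Rightarrow> stage \<Rightarrow> bool" where
  "approx \<theta> R W \<longleftrightarrow> finite R \<and> (\<forall>e\<in>R. fst e \<in> \<theta>) \<and>
     (\<forall>z\<in>pts \<theta>. \<forall>w\<in>pts \<theta>. \<forall>t. agree R z w t \<longrightarrow> W z t = W w t) \<and>
     (\<forall>z\<in>pts \<theta>. \<forall>w\<in>pts \<theta>. \<forall>t. length (W z t) = length (W w t)) \<and>
     (\<exists>C. finite C \<and> C \<subseteq> \<theta> \<and> (\<forall>z\<in>pts \<theta>. \<forall>t. t \<notin> C \<longrightarrow> W z t = [])) \<and>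
     (\<forall>z\<in>pts \<theta>. \<forall>t. set (W z t) \<subseteq> {0, 1}) \<and>
     (\<forall>e\<in>R. \<exists>p. \<forall>z\<in>pts \<theta>. p < length (W z (fst e)) \<and> W z (fst e) ! p = z (fst e) (snd e))"

definition refines :: "ord1 list set \<Rightarrow> stage \<Rightarrow> stage \<Rightarrow> bool" where
  "refines \<theta> W W' \<longleftrightarrow> (\<forall>z\<in>pts \<theta>. \<forall>t. \<exists>u. W' z t = W z t @ u)"

definition cyl :: "ord1 list set \<Rightarrow> stage \<Rightarrow> pt \<Rightarrow> pt set" where
  "cyl \<theta> W z = {x \<in> pts \<theta>. \<forall>t. \<forall>q<length (W z t). x t q = W z t ! q}"

lemma agree_refl: "agree R z z t"
  by (simp add: agree_def)

lemma agree_sym: "agree R z w t \<Longrightarrow> agree R w z t"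
  by (simp add: agree_def)

lemma agree_trans: "agree R z w t \<Longrightarrow> agree R w v t \<Longrightarrow> agree R z v t"
  by (simp add: agree_def)

lemma agree_down: "agree R z w t \<Longrightarrow> s \<in> down t \<Longrightarrow> agree R z w s"
  unfolding agree_def using down_trans by blast

lemma agree_mono: "agree R' z w t \<Longrightarrow> R \<subseteq> R' \<Longrightarrow> agree R z w t"
  unfolding agree_def by blast

lemma approx_finite: "approx \<theta> R W \<Longrightarrow> finite R"
  by (simp add: approx_def)

lemma approx_nodes: "approx \<theta> R W \<Longrightarrow> e \<in> R \<Longrightarrow> fst e \<in> \<theta>"
  unfolding approx_def by (elim conjE) blast

lemma approx_agree:
  assumes "approx \<theta> R W" "z \<in> pts \<theta>" "w \<in> pts \<theta>" "agree R z w t"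
  shows "W z t = W w t"
proof -
  have "\<forall>z\<in>pts \<theta>. \<forall>w\<in>pts \<theta>. \<forall>t. agree R z w t \<longrightarrow> W z t = W w t"
    using assms(1) unfolding approx_def by (elim conjE) assumption
  then show ?thesis
    using assms(2-4) by blast
qed

lemma approx_length:
  assumes "approx \<theta> R W" "z \<in> pts \<theta>" "w \<in> pts \<theta>"
  shows "length (W z t) = length (W w t)"
proof -
  have "\<forall>z\<in>pts \<theta>. \<forall>w\<in>pts \<theta>. \<forall>t. length (W z t) = length (W w t)"
    using assms(1) unfolding approx_def by (elim conjE) assumption
  then show ?thesis
    using assms(2,3) by blast
qed

lemma approx_support:
  "approx \<theta> R W \<Longrightarrow> \<exists>C. finite C \<and> C \<subseteq> \<theta> \<and> (\<forall>z\<in>pts \<theta>. \<forall>t. t \<notin> C \<longrightarrow> W z t = [])"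
  unfolding approx_def by (elim conjE) assumption

lemma approx_bits: "approx \<theta> R W \<Longrightarrow> z \<in> pts \<theta> \<Longrightarrow> set (W z t) \<subseteq> {0, 1}"
  unfolding approx_def by (elim conjE) blast

lemma approx_copies:
  assumes "approx \<theta> R W" "e \<in> R"
  shows "\<exists>p. \<forall>z\<in>pts \<theta>. p < length (W z (fst e)) \<and> W z (fst e) ! p = z (fst e) (snd e)"
proof -
  have "\<forall>e\<in>R. \<exists>p. \<forall>z\<in>pts \<theta>. p < length (W z (fst e)) \<and> W z (fst e) ! p = z (fst e) (snd e)"
    using assms(1) unfolding approx_def by (elim conjE) assumption
  then show ?thesis
    using assms(2) by blast
qed

lemma approx_outside: "approx \<theta> R W \<Longrightarrow> z \<in> pts \<theta> \<Longrightarrow> t \<notin> \<theta> \<Longrightarrow> W z t = []"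
  using approx_support by blast

lemma approx_empty: "approx \<theta> {} (\<lambda>z t. [])"
  unfolding approx_def by (auto intro: exI[of _ "{}"])

lemma refines_refl: "refines \<theta> W W"
  by (auto simp: refines_def)

lemma refines_trans: "refines \<theta> W1 W2 \<Longrightarrow> refines \<theta> W2 W3 \<Longrightarrow> refines \<theta> W1 W3"
  unfolding refines_def by (metis append.assoc)

lemma refines_nth:
  "refines \<theta> W W' \<Longrightarrow> z \<in> pts \<theta> \<Longrightarrow> q < length (W z t) \<Longrightarrow> W' z t ! q = W z t ! q"
  unfolding refines_def by (metis nth_append)

lemma refines_length: "refines \<theta> W W' \<Longrightarrow> z \<in> pts \<theta> \<Longrightarrow> length (W z t) \<le> length (W' z t)"
  unfolding refines_def by (metis le_add1 length_append)

lemma cyl_subset: "cyl \<theta> W z \<subseteq> pts \<theta>"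
  by (auto simp: cyl_def)

lemma cyl_antimono:
  assumes "refines \<theta> W W'" "z \<in> pts \<theta>"
  shows "cyl \<theta> W' z \<subseteq> cyl \<theta> W z"
proof
  fix x assume x: "x \<in> cyl \<theta> W' z"
  have "x t q = W z t ! q" if "q < length (W z t)" for t q
  proof -
    have "q < length (W' z t)"
      using refines_length[OF assms, of t] that by simp
    then have "x t q = W' z t ! q"
      using x by (simp add: cyl_def)
    also have "\<dots> = W z t ! q"
      using refines_nth[of \<theta> W W' z q t] assms that by blast
    finally show ?thesis .
  qed
  then show "x \<in> cyl \<theta> W z"
    using x by (simp add: cyl_def)
qed

lemma cyl_cong:
  assumes "approx \<theta> R W" "z \<in> pts \<theta>" "w \<in> pts \<theta>" "\<And>t. agree R z w t"
  shows "cyl \<theta> W z = cyl \<theta> W w"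
proof -
  have "W z = W w"
    using approx_agree[OF assms(1-3) assms(4)] by (rule ext)
  then show ?thesis
    by (simp add: cyl_def)
qed

lemma openin_cyl:
  assumes W: "approx \<theta> R W" and z: "z \<in> pts \<theta>"
  shows "openin (Dpow \<theta>) (cyl \<theta> W z)"
proof -
  obtain C where C: "finite C" "\<forall>z\<in>pts \<theta>. \<forall>t. t \<notin> C \<longrightarrow> W z t = []"
    using approx_support[OF W] by blast
  define E where "E = (SIGMA t:C. {..<length (W z t)})"
  have "cyl \<theta> W z = {y \<in> pts \<theta>. \<forall>e\<in>E. y (fst e) (snd e) = W z (fst e) ! snd e}"
  proof (intro set_eqI iffI)
    fix y assume "y \<in> cyl \<theta> W z"
    then show "y \<in> {y \<in> pts \<theta>. \<forall>e\<in>E. y (fst e) (snd e) = W z (fst e) ! snd e}"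
      by (auto simp: cyl_def E_def)
  next
    fix y assume y: "y \<in> {y \<in> pts \<theta>. \<forall>e\<in>E. y (fst e) (snd e) = W z (fst e) ! snd e}"
    have "y t q = W z t ! q" if "q < length (W z t)" for t q
    proof -
      have "t \<in> C"
        using C(2) z that by fastforce
      then show ?thesis
        using y that by (force simp: E_def)
    qed
    then show "y \<in> cyl \<theta> W z"
      using y by (simp add: cyl_def)
  qed
  moreover have "finite E"
    unfolding E_def using C(1) by auto
  ultimately show ?thesis
    using openin_Dpow_cylinder by simp
qed

definition cyl_pt :: "ord1 list set \<Rightarrow> stage \<Rightarrow> pt \<Rightarrow> pt" where
  "cyl_pt \<theta> W z = (\<lambda>t. if t \<in> \<theta> then (\<lambda>q. if q < length (W z t) then W z t ! q else 0) else undefined)"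

lemma cyl_pt_in_cyl:
  assumes W: "approx \<theta> R W" and z: "z \<in> pts \<theta>"
  shows "cyl_pt \<theta> W z \<in> cyl \<theta> W z"
proof -
  have "W z t ! q \<in> {0, 1}" if "q < length (W z t)" for t q
    using approx_bits[OF W z, of t] that by (meson nth_mem subsetD)
  then have "cyl_pt \<theta> W z \<in> pts \<theta>"
    by (simp add: mem_pts_iff cyl_pt_def)
  moreover have "t \<in> \<theta>" if "q < length (W z t)" for t q
    using approx_outside[OF W z] that by fastforce
  ultimately show ?thesis
    by (simp add: cyl_def cyl_pt_def)
qed

lemma cyl_nonempty: "approx \<theta> R W \<Longrightarrow> z \<in> pts \<theta> \<Longrightarrow> cyl \<theta> W z \<noteq> {}"
  using cyl_pt_in_cyl by blast

lemma set_map_subset: "(\<And>q. f q \<in> A) \<Longrightarrow> set (map f xs) \<subseteq> A"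
  by auto

lemma approx_append:
  assumes W: "approx \<theta> R W" and R': "finite R'" "R \<subseteq> R'" "\<forall>e\<in>R'. fst e \<in> \<theta>"
    and dep: "\<And>z w t. z \<in> pts \<theta> \<Longrightarrow> w \<in> pts \<theta> \<Longrightarrow> agree R' z w t \<Longrightarrow> u z t = u w t"
    and len: "\<And>z w t. z \<in> pts \<theta> \<Longrightarrow> w \<in> pts \<theta> \<Longrightarrow> length (u z t) = length (u w t)"
    and supp: "finite C" "C \<subseteq> \<theta>" "\<And>z t. t \<notin> C \<Longrightarrow> u z t = []"
    and bits: "\<And>z t. z \<in> pts \<theta> \<Longrightarrow> set (u z t) \<subseteq> {0, 1}"
    and copies: "\<And>e. e \<in> R' - R \<Longrightarrow>
      \<exists>p. \<forall>z\<in>pts \<theta>. p < length (u z (fst e)) \<and> u z (fst e) ! p = z (fst e) (snd e)"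
  shows "approx \<theta> R' (\<lambda>z t. W z t @ u z t)"
  unfolding approx_def
proof (intro conjI ballI allI impI)
  fix z w t assume z: "z \<in> pts \<theta>" and w: "w \<in> pts \<theta>"
  show "length (W z t @ u z t) = length (W w t @ u w t)"
    using approx_length[OF W z w] len[OF z w] by simp
  assume "agree R' z w t"
  then show "W z t @ u z t = W w t @ u w t"
    using approx_agree[OF W z w] agree_mono dep[OF z w] R'(2) by metis
next
  obtain C0 where C0: "finite C0" "C0 \<subseteq> \<theta>" "\<forall>z\<in>pts \<theta>. \<forall>t. t \<notin> C0 \<longrightarrow> W z t = []"
    using approx_support[OF W] by blast
  then show "\<exists>C. finite C \<and> C \<subseteq> \<theta> \<and> (\<forall>z\<in>pts \<theta>. \<forall>t. t \<notin> C \<longrightarrow> W z t @ u z t = [])"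
    using supp by (intro exI[of _ "C0 \<union> C"]) auto
next
  fix z t assume "z \<in> pts \<theta>"
  then show "set (W z t @ u z t) \<subseteq> {0, 1}"
    using approx_bits[OF W] bits by simp
next
  fix e assume e: "e \<in> R'"
  show "\<exists>p. \<forall>z\<in>pts \<theta>. p < length (W z (fst e) @ u z (fst e)) \<and>
      (W z (fst e) @ u z (fst e)) ! p = z (fst e) (snd e)"
  proof (cases "e \<in> R")
    case True
    then obtain p where "\<forall>z\<in>pts \<theta>. p < length (W z (fst e)) \<and> W z (fst e) ! p = z (fst e) (snd e)"
      using approx_copies[OF W] by blast
    then show ?thesis
      by (auto simp: nth_append intro!: exI[of _ p])
  next
    case False
    then obtain p where p: "\<forall>z\<in>pts \<theta>. p < length (u z (fst e)) \<and> u z (fst e) ! p = z (fst e) (snd e)"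
      using copies e by blast
    define z0 :: pt where "z0 = restrict (\<lambda>_ _. 0) \<theta>"
    have "z0 \<in> pts \<theta>"
      by (simp add: z0_def mem_pts_iff)
    then have "\<forall>z\<in>pts \<theta>. length (W z (fst e)) = length (W z0 (fst e))"
      using approx_length[OF W] by blast
    then show ?thesis
      using p by (intro exI[of _ "length (W z0 (fst e)) + p"]) (auto simp: nth_append)
  qed
qed (use R' in auto)

lemma refines_append: "refines \<theta> W (\<lambda>z t. W z t @ u z t)"
  by (auto simp: refines_def)

lemma approx_reveal:
  assumes Xi: "\<theta> \<in> Xi" and W: "approx \<theta> R W" and T: "finite T" "T \<subseteq> \<theta>"
  shows "approx \<theta> (R \<union> T \<times> {..n}) (\<lambda>z t. W z t @ (if t \<in> T then map (z t) [0..<Suc n] else []))"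
proof (rule approx_append[OF W _ _ _ _ _ T])
  fix z w t assume "z \<in> pts \<theta>" "w \<in> pts \<theta>" and zw: "agree (R \<union> T \<times> {..n}) z w t"
  have "z t m = w t m" if "t \<in> T" "m \<le> n" for m
    using zw that down_self[OF Xi_neq_Nil[OF Xi]] T(2) by (auto simp: agree_def)
  then show "(if t \<in> T then map (z t) [0..<Suc n] else []) = (if t \<in> T then map (w t) [0..<Suc n] else [])"
    by auto
next
  fix z t assume z: "z \<in> pts \<theta>"
  show "set (if t \<in> T then map (z t) [0..<Suc n] else []) \<subseteq> {0, 1}"
  proof (cases "t \<in> T")
    case True
    then have "z t m \<in> {0, 1}" for m
      using z T(2) by (auto simp: mem_pts_iff)
    then have "set (map (z t) [0..<Suc n]) \<subseteq> {0, 1}"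
      by (rule set_map_subset)
    then show ?thesis
      using True by simp
  qed simp
next
  fix e assume "e \<in> R \<union> T \<times> {..n} - R"
  then show "\<exists>p. \<forall>z\<in>pts \<theta>. p < length (if fst e \<in> T then map (z (fst e)) [0..<Suc n] else []) \<and>
      (if fst e \<in> T then map (z (fst e)) [0..<Suc n] else []) ! p = z (fst e) (snd e)"
    by (intro exI[of _ "snd e"]) (auto simp del: upt_Suc)
qed (use approx_finite[OF W] approx_nodes[OF W] T in auto)

lemma cyl_mix:
  assumes W: "approx \<theta> R W" and z: "z \<in> pts \<theta>" and w: "w \<in> pts \<theta>"
    and x: "x \<in> cyl \<theta> W z" and b: "b \<in> cyl \<theta> W w"
  shows "(\<lambda>t. if agree R z w t then x t else b t) \<in> cyl \<theta> W w"
proof -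
  have "x \<in> pts \<theta>" "b \<in> pts \<theta>"
    using x b cyl_subset by blast+
  then have "(\<lambda>t. if agree R z w t then x t else b t) \<in> pts \<theta>"
    by (simp add: mem_pts_iff)
  moreover have "x t q = W w t ! q" if "agree R z w t" "q < length (W w t)" for t q
    using x that approx_agree[OF W z w that(1)] by (simp add: cyl_def)
  ultimately show ?thesis
    using b by (simp add: cyl_def)
qed

lemma flip_bit_in_cyl:
  assumes "x \<in> cyl \<theta> W z" "i \<in> \<theta>"
  shows "flip_bit x i (length (W z i)) \<in> cyl \<theta> W z"
proof -
  have "x \<in> pts \<theta>"
    using assms(1) cyl_subset by blast
  then have "flip_bit x i (length (W z i)) \<in> pts \<theta>"
    using assms(2) by (rule flip_bit_in_pts)
  moreover have "flip_bit x i (length (W z i)) t q = x t q" if "q < length (W z t)" for t q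
    using that by (cases "t = i") (simp_all add: flip_bit_below flip_bit_other)
  ultimately show ?thesis
    using assms(1) by (simp add: cyl_def)
qed

definition pad :: "stage \<Rightarrow> ord1 list set \<Rightarrow> nat \<Rightarrow> (pt \<Rightarrow> ord1 list \<Rightarrow> nat \<Rightarrow> nat) \<Rightarrow> stage" where
  "pad W C L f = (\<lambda>z t. W z t @ (if t \<in> C then map (f z t) [length (W z t)..<L] else []))"

lemma approx_pad:
  assumes W: "approx \<theta> R W" and C: "finite C" "C \<subseteq> \<theta>"
    and f_agree: "\<And>z w t. z \<in> pts \<theta> \<Longrightarrow> w \<in> pts \<theta> \<Longrightarrow> agree R z w t \<Longrightarrow> f z t = f w t"
    and f_bits: "\<And>z t q. z \<in> pts \<theta> \<Longrightarrow> t \<in> C \<Longrightarrow> f z t q \<in> {0, 1}"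
  shows "approx \<theta> R (pad W C L f)"
  unfolding pad_def
proof (rule approx_append[OF W approx_finite[OF W] subset_refl _ _ _ C])
  fix z w t assume z: "z \<in> pts \<theta>" and w: "w \<in> pts \<theta>"
  show "length (if t \<in> C then map (f z t) [length (W z t)..<L] else []) =
      length (if t \<in> C then map (f w t) [length (W w t)..<L] else [])"
    using approx_length[OF W z w, of t] by simp
  assume "agree R z w t"
  then show "(if t \<in> C then map (f z t) [length (W z t)..<L] else []) =
      (if t \<in> C then map (f w t) [length (W w t)..<L] else [])"
    using approx_agree[OF W z w] f_agree[OF z w] by simp
next
  fix z t assume z: "z \<in> pts \<theta>"
  show "set (if t \<in> C then map (f z t) [length (W z t)..<L] else []) \<subseteq> {0, 1}"
  proof (cases "t \<in> C")
    case True
    then have "set (map (f z t) [length (W z t)..<L]) \<subseteq> {0, 1}"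
      by (intro set_map_subset f_bits[OF z])
    then show ?thesis
      using True by simp
  qed simp
qed (use approx_nodes[OF W] in auto)

lemma refines_pad: "refines \<theta> W (pad W C L f)"
  unfolding pad_def by (rule refines_append)

lemma cyl_pad:
  assumes "x \<in> cyl \<theta> (pad W C L f) z" "t \<in> C" "q < L"
  shows "x t q = (if q < length (W z t) then W z t ! q else f z t q)"
proof -
  have "pad W C L f z t = W z t @ map (f z t) [length (W z t)..<L]"
    using assms(2) by (simp add: pad_def)
  moreover from this have "q < length (pad W C L f z t)"
    using assms(3) by simp
  ultimately show ?thesis
    using assms(1) by (simp add: cyl_def nth_append)
qed

lemma approx_inside_open:
  assumes U: "openin (Dpow \<theta>) U" "x0 \<in> U"
  shows "\<exists>W. approx \<theta> {} W \<and> (\<forall>z. cyl \<theta> W z \<subseteq> U)"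
proof -
  have x0: "x0 \<in> pts \<theta>"
    using U openin_subset by blast
  obtain C L where C: "finite C" "C \<subseteq> \<theta>"
    and CU: "\<forall>y\<in>pts \<theta>. (\<forall>t\<in>C. \<forall>q<L. y t q = x0 t q) \<longrightarrow> y \<in> U"
    using openin_Dpow_cylinder_nbhd[OF U] by blast
  have "approx \<theta> {} (pad (\<lambda>z t. []) C L (\<lambda>z. x0))"
  proof (rule approx_pad[OF approx_empty C])
    fix z t q assume "t \<in> C"
    then show "x0 t q \<in> {0, 1}"
      using pts_bit[OF x0] C(2) by blast
  qed simp
  moreover have "cyl \<theta> (pad (\<lambda>z t. []) C L (\<lambda>z. x0)) z \<subseteq> U" for z
    using CU cyl_subset cyl_pad[where W = "\<lambda>z t. []"] by fastforce
  ultimately show ?thesis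
    by blast
qed

text \<open>Where the stage cannot distinguish z0 from w0 it must pad both in the same way, so x and y
  have to agree there.\<close>

lemma approx_freeze:
  assumes W: "approx \<theta> R W" and x: "x \<in> cyl \<theta> W z0" and y: "y \<in> cyl \<theta> W w0"
    and xy: "\<And>t. agree R z0 w0 t \<Longrightarrow> x t = y t" and C: "finite C" "C \<subseteq> \<theta>"
  shows "\<exists>W'. approx \<theta> R W' \<and> refines \<theta> W W' \<and>
    (\<forall>x'\<in>cyl \<theta> W' z0. \<forall>t\<in>C. \<forall>q<L. x' t q = x t q) \<and>
    (\<forall>y'\<in>cyl \<theta> W' w0. \<forall>t\<in>C. \<forall>q<L. y' t q = y t q)"
proof -
  define pick where
    "pick z t = (if agree R z z0 t then x t else if agree R z w0 t then y t else (\<lambda>_. 0))" for z t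
  have "approx \<theta> R (pad W C L pick)"
  proof (rule approx_pad[OF W C])
    fix z w t assume "agree R z w t"
    then have "agree R z z0 t = agree R w z0 t" "agree R z w0 t = agree R w w0 t"
      using agree_sym agree_trans by metis+
    then show "pick z t = pick w t"
      by (simp add: pick_def)
  next
    fix z t q assume "t \<in> C"
    then have "x t q \<in> {0, 1}" "y t q \<in> {0, 1}"
      using x y cyl_subset C(2) pts_bit by blast+
    then show "pick z t q \<in> {0, 1}"
      by (simp add: pick_def)
  qed
  moreover have "x' t q = x t q" if "x' \<in> cyl \<theta> (pad W C L pick) z0" "t \<in> C" "q < L" for x' t q
    using cyl_pad[OF that] x agree_refl by (simp add: cyl_def pick_def)
  moreover have "y' t q = y t q" if "y' \<in> cyl \<theta> (pad W C L pick) w0" "t \<in> C" "q < L" for y' t q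
    using cyl_pad[OF that] y agree_refl xy agree_sym by (simp add: cyl_def pick_def)
  ultimately show ?thesis
    using refines_pad by blast
qed

lemma finite_agree_representatives:
  assumes R: "finite R" "\<forall>e\<in>R. fst e \<in> \<theta>"
  shows "\<exists>F. finite F \<and> F \<subseteq> pts \<theta> \<and> (\<forall>z\<in>pts \<theta>. \<exists>v\<in>F. \<forall>t. agree R z v t)"
proof -
  define rep where
    "rep f = (\<lambda>t. if t \<in> \<theta> then (\<lambda>m. if (t, m) \<in> R then f (t, m) else 0) else undefined)"
    for f :: "ord1 list \<times> nat \<Rightarrow> nat"
  define F where "F = rep ` (R \<rightarrow>\<^sub>E {0, 1})"
  have "finite F"
    unfolding F_def using R(1) by (intro finite_imageI finite_PiE) auto
  moreover have "F \<subseteq> pts \<theta>"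
    by (auto simp: F_def rep_def mem_pts_iff PiE_iff)
  moreover have "\<exists>v\<in>F. \<forall>t. agree R z v t" if z: "z \<in> pts \<theta>" for z
  proof -
    define f where "f = restrict (\<lambda>e. z (fst e) (snd e)) R"
    have "z (fst e) (snd e) \<in> {0, 1}" if "e \<in> R" for e
      using z R(2) that by (simp add: mem_pts_iff)
    then have "f \<in> R \<rightarrow>\<^sub>E {0, 1}"
      unfolding f_def restrict_PiE_iff by blast
    moreover have "agree R z (rep f) t" for t
      using R(2) by (force simp: agree_def rep_def f_def)
    ultimately show ?thesis
      unfolding F_def by blast
  qed
  ultimately show ?thesis
    by blast
qed

section \<open>The limit of a fusion sequence\<close>

definition revealed :: "(nat \<Rightarrow> ord1 list) \<Rightarrow> nat \<Rightarrow> (ord1 list \<times> nat) set" where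
  "revealed e n = e ` {..<n} \<times> {..<n}"

lemma finite_revealed: "finite (revealed e n)"
  by (simp add: revealed_def)

locale fusion =
  fixes \<theta> :: "ord1 list set" and e :: "nat \<Rightarrow> ord1 list" and Ws :: "nat \<Rightarrow> stage"
  assumes Xi: "\<theta> \<in> Xi" and enum: "range e = \<theta>"
    and approx_Ws: "approx \<theta> (revealed e n) (Ws n)"
    and refines_Suc: "refines \<theta> (Ws n) (Ws (Suc n))"
    and grows: "z \<in> pts \<theta> \<Longrightarrow> k \<le> n \<Longrightarrow> length (Ws n z (e k)) < length (Ws (Suc n) z (e k))"
begin

lemma refines_le: "m \<le> n \<Longrightarrow> refines \<theta> (Ws m) (Ws n)"
  by (induction n rule: dec_induct) (auto intro: refines_refl refines_trans refines_Suc)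

lemma Ws_nth_stable:
  assumes "z \<in> pts \<theta>" "m \<le> n" "q < length (Ws m z t)"
  shows "Ws n z t ! q = Ws m z t ! q"
  using refines_nth[of \<theta> "Ws m" "Ws n" z q t] refines_le assms by blast

lemma length_Ws_ge: "z \<in> pts \<theta> \<Longrightarrow> d \<le> length (Ws (k + d) z (e k))"
proof (induction d)
  case (Suc d)
  then show ?case
    using grows[of z k "k + d"] by simp
qed simp

definition index :: "ord1 list \<Rightarrow> nat" where
  "index t = (SOME k. e k = t)"

lemma e_index: "t \<in> \<theta> \<Longrightarrow> e (index t) = t"
  unfolding index_def using enum by (metis (mono_tags) rangeE someI)

text \<open>Bit q of coordinate t is final from stage index t + q + 1 on.\<close>

definition limit :: "pt \<Rightarrow> pt" where
  "limit z = (\<lambda>t. if t \<in> \<theta> then (\<lambda>q. Ws (index t + Suc q) z t ! q) else undefined)"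

lemma length_Ws_final:
  assumes "z \<in> pts \<theta>" "t \<in> \<theta>"
  shows "q < length (Ws (index t + Suc q) z t)"
proof -
  have "Suc q \<le> length (Ws (index t + Suc q) z (e (index t)))"
    by (rule length_Ws_ge[OF assms(1)])
  then show ?thesis
    using e_index[OF assms(2)] by simp
qed

lemma limit_in_cyl:
  assumes z: "z \<in> pts \<theta>"
  shows "limit z \<in> cyl \<theta> (Ws n) z"
proof -
  have "limit z t q \<in> {0, 1}" if "t \<in> \<theta>" for t q
  proof -
    have "Ws (index t + Suc q) z t ! q \<in> set (Ws (index t + Suc q) z t)"
      using length_Ws_final[OF z that] by (rule nth_mem)
    then show ?thesis
      using approx_bits[OF approx_Ws z] that by (auto simp: limit_def)
  qed
  then have "limit z \<in> pts \<theta>"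
    by (simp add: mem_pts_iff limit_def)
  moreover have "limit z t q = Ws n z t ! q" if q: "q < length (Ws n z t)" for t q
  proof -
    have t: "t \<in> \<theta>"
      using approx_outside[OF approx_Ws z] q by fastforce
    show ?thesis
    proof (cases "index t + Suc q \<le> n")
      case True
      then show ?thesis
        using Ws_nth_stable[OF z True length_Ws_final[OF z t]] t by (simp add: limit_def)
    next
      case False
      then show ?thesis
        using Ws_nth_stable[OF z _ q, of "index t + Suc q"] t by (simp add: limit_def)
    qed
  qed
  ultimately show ?thesis
    by (simp add: cyl_def)
qed

lemma limit_in_pts: "z \<in> pts \<theta> \<Longrightarrow> limit z \<in> pts \<theta>"
  using limit_in_cyl cyl_subset by blast

lemma limit_copies: "t \<in> \<theta> \<Longrightarrow> \<exists>p. \<forall>z\<in>pts \<theta>. limit z t p = z t m"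
proof -
  assume t: "t \<in> \<theta>"
  define n where "n = Suc (index t + m)"
  have "index t < n" "m < n"
    by (simp_all add: n_def)
  then have "(t, m) \<in> revealed e n"
    using e_index[OF t] by (auto simp: revealed_def intro: rev_image_eqI)
  then obtain p where p: "\<forall>z\<in>pts \<theta>. p < length (Ws n z t) \<and> Ws n z t ! p = z t m"
    using approx_copies[OF approx_Ws] by fastforce
  have "limit z t p = z t m" if "z \<in> pts \<theta>" for z
    using limit_in_cyl[OF that, of n] p that by (simp add: cyl_def)
  then show ?thesis
    by blast
qed

lemma limit_coord_inj:
  assumes "t \<in> \<theta>" "z \<in> pts \<theta>" "w \<in> pts \<theta>" "limit z t = limit w t"
  shows "z t = w t"
proof
  fix m
  obtain p where "\<forall>z\<in>pts \<theta>. limit z t p = z t m"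
    using limit_copies[OF assms(1)] by blast
  then show "z t m = w t m"
    using assms(2-4) by metis
qed

lemma continuous_map_limit: "continuous_map (Dpow \<theta>) (Dpow \<theta>) limit"
proof (rule continuous_map_into_Dpow)
  fix t assume t: "t \<in> \<theta>"
  have "continuous_map (Dpow \<theta>) euclidean (\<lambda>z. limit z t q)" for q
  proof (rule continuous_map_locally_constant)
    fix z assume z: "z \<in> topspace (Dpow \<theta>)"
    define N where "N = index t + Suc q"
    define U where "U = {y \<in> pts \<theta>. \<forall>e\<in>revealed e N. y (fst e) (snd e) = z (fst e) (snd e)}"
    have "openin (Dpow \<theta>) U"
      unfolding U_def by (rule openin_Dpow_cylinder[OF finite_revealed])
    moreover have "limit y t q = limit z t q" if "y \<in> U" for y
    proof -
      have "y \<in> pts \<theta>" "agree (revealed e N) y z t"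
        using that unfolding U_def agree_def by fastforce+
      then have "Ws N y t = Ws N z t"
        using approx_agree[OF approx_Ws _ z] by blast
      then show ?thesis
        using t by (simp add: limit_def N_def)
    qed
    moreover have "z \<in> U"
      using z by (simp add: U_def)
    ultimately show "\<exists>U. openin (Dpow \<theta>) U \<and> z \<in> U \<and> (\<forall>y\<in>U. limit y t q = limit z t q)"
      by blast
  qed
  then show "continuous_map (Dpow \<theta>) euclidean (\<lambda>z. limit z t)"
    unfolding euclidean_product_topology[symmetric] continuous_map_componentwise_UNIV by simp
next
  fix z t assume "z \<in> topspace (Dpow \<theta>)" "t \<in> \<theta>"
  then show "limit z t \<in> Cantor"
    using limit_in_pts by (auto simp: mem_pts_iff Cantor_def)
qed (simp add: limit_def extensional_def)

lemma section_map_limit: "section_map (Dpow \<theta>) (Dpow \<theta>) limit"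
  unfolding section_map_def retraction_maps_def
proof -
  define pos where "pos t m = (SOME p. \<forall>z\<in>pts \<theta>. limit z t p = z t m)" for t m
  have pos: "limit z t (pos t m) = z t m" if "t \<in> \<theta>" "z \<in> pts \<theta>" for t m z
    using someI_ex[OF limit_copies[OF that(1), of m]] that(2) unfolding pos_def by blast
  define K' where "K' y = (\<lambda>t. if t \<in> \<theta> then (\<lambda>m. y t (pos t m)) else undefined)" for y :: pt
  have "continuous_map (Dpow \<theta>) (Dpow \<theta>) K'"
  proof (rule continuous_map_into_Dpow)
    fix t assume "t \<in> \<theta>"
    then show "continuous_map (Dpow \<theta>) euclidean (\<lambda>y. K' y t)"
      unfolding euclidean_product_topology[symmetric] continuous_map_componentwise_UNIV
      by (simp add: K'_def continuous_map_Dpow_bit)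
  qed (auto simp: K'_def Cantor_def mem_pts_iff extensional_def)
  moreover have "K' (limit z) = z" if "z \<in> pts \<theta>" for z
    using pos[OF _ that] that by (auto simp: K'_def mem_pts_iff)
  ultimately show "\<exists>K'. continuous_map (Dpow \<theta>) (Dpow \<theta>) K' \<and>
      continuous_map (Dpow \<theta>) (Dpow \<theta>) limit \<and> (\<forall>z\<in>pts \<theta>. K' (limit z) = z)"
    using continuous_map_limit by blast
qed

lemma IPS_embedding_limit: "IPS_embedding \<theta> limit"
proof -
  have "restrict z \<xi> = restrict w \<xi> \<longleftrightarrow> restrict (limit z) \<xi> = restrict (limit w) \<xi>"
    if \<xi>: "\<xi> \<in> Xi" "\<xi> \<subseteq> \<theta>" and z: "z \<in> pts \<theta>" and w: "w \<in> pts \<theta>" for \<xi> z w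
  proof
    assume zw: "restrict z \<xi> = restrict w \<xi>"
    have "limit z t = limit w t" if "t \<in> \<xi>" for t
    proof -
      have "\<forall>s\<in>down t. z s = w s"
        using zw down_subset_Xi[OF \<xi>(1) that] by (metis restrict_apply' subsetD)
      then have "agree R z w t" for R
        by (simp add: agree_def)
      then have "Ws n z t = Ws n w t" for n
        using approx_agree[OF approx_Ws z w] by blast
      then show ?thesis
        by (simp add: limit_def)
    qed
    then show "restrict (limit z) \<xi> = restrict (limit w) \<xi>"
      by (auto simp: restrict_def)
  next
    assume "restrict (limit z) \<xi> = restrict (limit w) \<xi>"
    then have "z t = w t" if "t \<in> \<xi>" for t
      using limit_coord_inj[of t z w] \<xi>(2) z w that by (metis restrict_apply' subsetD)
    then show "restrict z \<xi> = restrict w \<xi>"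
      by (auto simp: restrict_def)
  qed
  then show ?thesis
    using section_map_limit by (simp add: IPS_embedding_def preserves_restrictions_def)
qed

end

section \<open>Shrinking an IPS set\<close>

locale IPS_param =
  fixes \<theta> :: "ord1 list set" and X :: "pt set" and H :: "pt \<Rightarrow> pt"
  assumes Xi: "\<theta> \<in> Xi"
    and homeo: "homeomorphic_map (Dpow \<theta>) (subtopology (Dpow \<theta>) X) H"
    and restr: "preserves_restrictions \<theta> H"
begin

lemma H_continuous_in_X: "continuous_map (Dpow \<theta>) (subtopology (Dpow \<theta>) X) H"
  using homeo by (rule homeomorphic_imp_continuous_map)

lemma H_continuous: "continuous_map (Dpow \<theta>) (Dpow \<theta>) H"
  using H_continuous_in_X by (simp add: continuous_map_in_subtopology)

lemma H_in: "x \<in> pts \<theta> \<Longrightarrow> H x \<in> X \<inter> pts \<theta>"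
  using H_continuous_in_X
  by (auto simp: continuous_map_in_subtopology dest: continuous_map_image_subset_topspace)

lemma H_coord_continuous: "i \<in> \<theta> \<Longrightarrow> continuous_map (Dpow \<theta>) euclidean (\<lambda>x. H x i)"
  using continuous_map_compose[OF H_continuous continuous_map_Dpow_proj] by (simp add: o_def)

lemma H_restr:
  "x \<in> pts \<theta> \<Longrightarrow> y \<in> pts \<theta> \<Longrightarrow> \<xi> \<in> Xi \<Longrightarrow> \<xi> \<subseteq> \<theta> \<Longrightarrow>
    restrict x \<xi> = restrict y \<xi> \<longleftrightarrow> restrict (H x) \<xi> = restrict (H y) \<xi>"
  using restr by (simp add: preserves_restrictions_def)

lemma H_coord_local:
  assumes "i \<in> \<theta>" "x \<in> pts \<theta>" "y \<in> pts \<theta>" "\<forall>s\<in>down i. x s = y s"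
  shows "H x i = H y i"
proof -
  have "i \<noteq> []"
    using Xi_neq_Nil[OF Xi assms(1)] .
  moreover have "restrict x (down i) = restrict y (down i)"
    using assms(4) by (auto simp: restrict_def)
  ultimately have "restrict (H x) (down i) = restrict (H y) (down i)"
    using H_restr[OF assms(2,3) down_in_Xi down_subset_Xi[OF Xi assms(1)]] by simp
  then show ?thesis
    using down_self[OF \<open>i \<noteq> []\<close>] by (metis restrict_apply')
qed

lemma H_coord_sensitive:
  assumes i: "i \<in> \<theta>" and x: "x \<in> pts \<theta>" and y: "y \<in> pts \<theta>"
    and "\<forall>s. s \<noteq> i \<longrightarrow> x s = y s" and "x i \<noteq> y i"
  shows "H x i \<noteq> H y i"
proof
  assume eq: "H x i = H y i"
  have ne: "i \<noteq> []"
    using Xi_neq_Nil[OF Xi i] .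
  have sub: "down i \<subseteq> \<theta>"
    using down_subset_Xi[OF Xi i] .
  have "restrict x (down i - {i}) = restrict y (down i - {i})"
    using assms(4) by (auto simp: restrict_def)
  then have below: "restrict (H x) (down i - {i}) = restrict (H y) (down i - {i})"
    using H_restr[OF x y down_minus_self_in_Xi[OF ne]] sub by blast
  have "H x s = H y s" if "s \<in> down i" for s
    using that eq fun_cong[OF below, of s] by (cases "s = i") auto
  then have "restrict (H x) (down i) = restrict (H y) (down i)"
    by (auto simp: restrict_def)
  then have "restrict x (down i) = restrict y (down i)"
    using H_restr[OF x y down_in_Xi[OF ne] sub] by simp
  then show False
    using assms(5) down_self[OF ne] by (metis restrict_apply')
qed

lemma H_coord_flip:
  assumes "i \<in> \<theta>" "x \<in> pts \<theta>"
  shows "H (flip_bit x i L) i \<noteq> H x i"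
  by (rule H_coord_sensitive[OF assms(1) flip_bit_in_pts[OF assms(2,1)] assms(2)])
    (simp_all add: flip_bit_other flip_bit_neq[OF assms(2,1)])

text \<open>Of two distinct nodes, one is not below the other; flipping a bit of that one moves only
  its own coordinate of the image.\<close>

lemma nowhere_locally_eq_H_coords:
  assumes i: "i \<in> \<theta>" and j: "j \<in> \<theta>" and "i \<noteq> j"
  shows "nowhere_locally_eq \<theta> (\<lambda>x. H x j) (\<lambda>x. H x i)"
  unfolding nowhere_locally_eq_def
proof (intro allI impI)
  fix U assume U: "openin (Dpow \<theta>) U" "U \<noteq> {}"
  then obtain x where x: "x \<in> U" "x \<in> pts \<theta>"
    using openin_subset by blast
  obtain C L where CL: "\<forall>y\<in>pts \<theta>. (\<forall>t\<in>C. \<forall>q<L. y t q = x t q) \<longrightarrow> y \<in> U"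
    using openin_Dpow_cylinder_nbhd[OF U(1) x(1)] by blast
  have flip_in_U: "flip_bit x k L \<in> U" if "k \<in> \<theta>" for k
    using CL flip_bit_in_pts[OF x(2) that] by (simp add: flip_bit_def)
  have flip_keeps: "H (flip_bit x k L) l = H x l" if "k \<in> \<theta>" "l \<in> \<theta>" "k \<notin> down l" for k l
  proof (rule H_coord_local[OF that(2) flip_bit_in_pts[OF x(2) that(1)] x(2)])
    show "\<forall>s\<in>down l. flip_bit x k L s = x s"
      using that(3) flip_bit_other by metis
  qed
  show "\<exists>y\<in>U. H y j \<noteq> H y i"
  proof (cases "H x j = H x i")
    case same: True
    have "j \<notin> down i \<or> i \<notin> down j"
      using down_antisym \<open>i \<noteq> j\<close> by blast
    then show ?thesis
    proof
      assume "j \<notin> down i"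
      then have "H (flip_bit x j L) j \<noteq> H (flip_bit x j L) i"
        using same flip_keeps[OF j i] H_coord_flip[OF j x(2), of L] by metis
      then show ?thesis
        using flip_in_U[OF j] by blast
    next
      assume "i \<notin> down j"
      then have "H (flip_bit x i L) j \<noteq> H (flip_bit x i L) i"
        using same flip_keeps[OF i j] H_coord_flip[OF i x(2), of L] by metis
      then show ?thesis
        using flip_in_U[OF i] by blast
    qed
  qed (use x in blast)
qed

lemma preserves_restrictions_H_comp:
  assumes "preserves_restrictions \<theta> K" "K ` pts \<theta> \<subseteq> pts \<theta>"
  shows "preserves_restrictions \<theta> (H \<circ> K)"
  unfolding preserves_restrictions_def
proof (intro ballI impI)
  fix x0 x1 \<xi> assume x: "x0 \<in> pts \<theta>" "x1 \<in> pts \<theta>" and \<xi>: "\<xi> \<in> Xi" "\<xi> \<subseteq> \<theta>"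
  have "restrict x0 \<xi> = restrict x1 \<xi> \<longleftrightarrow> restrict (K x0) \<xi> = restrict (K x1) \<xi>"
    using assms(1) x \<xi> unfolding preserves_restrictions_def by blast
  also have "\<dots> \<longleftrightarrow> restrict (H (K x0)) \<xi> = restrict (H (K x1)) \<xi>"
    using H_restr[OF _ _ \<xi>] assms(2) x by blast
  finally show "restrict x0 \<xi> = restrict x1 \<xi> \<longleftrightarrow> restrict ((H \<circ> K) x0) \<xi> = restrict ((H \<circ> K) x1) \<xi>"
    by simp
qed

lemma IPS_image_embedding:
  assumes K: "IPS_embedding \<theta> K"
  shows "H ` K ` pts \<theta> \<in> IPS \<theta>" "H ` K ` pts \<theta> \<subseteq> X"
proof -
  have "section_map (Dpow \<theta>) (Dpow \<theta>) K"
    using K by (simp add: IPS_embedding_def)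
  then have hK: "homeomorphic_map (Dpow \<theta>) (subtopology (Dpow \<theta>) (K ` pts \<theta>)) K"
    unfolding embedding_map_def[symmetric] by (rule section_imp_embedding_map)
  have "K ` pts \<theta> = pts \<theta> \<inter> K ` pts \<theta>"
    using homeomorphic_imp_surjective_map[OF hK] by (simp only: topspace_subtopology)
  then have K_pts: "K ` pts \<theta> \<subseteq> pts \<theta>"
    by blast
  have HK: "H ` K ` pts \<theta> \<subseteq> X \<inter> pts \<theta>"
    using K_pts H_in by blast
  then show YX: "H ` K ` pts \<theta> \<subseteq> X"
    by blast
  have "H ` (pts \<theta> \<inter> K ` pts \<theta>) = topspace (subtopology (Dpow \<theta>) X) \<inter> H ` K ` pts \<theta>"
    using K_pts HK by (simp add: Int_absorb1 Int_absorb2 Int_commute)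
  then have "homeomorphic_map (subtopology (Dpow \<theta>) (K ` pts \<theta>))
      (subtopology (subtopology (Dpow \<theta>) X) (H ` K ` pts \<theta>)) H"
    by (rule homeomorphic_map_subtopologies[OF homeo])
  then have "homeomorphic_map (subtopology (Dpow \<theta>) (K ` pts \<theta>)) (subtopology (Dpow \<theta>) (H ` K ` pts \<theta>)) H"
    using YX by (simp add: subtopology_subtopology Int_absorb1)
  with hK have "homeomorphic_map (Dpow \<theta>) (subtopology (Dpow \<theta>) (H ` K ` pts \<theta>)) (H \<circ> K)"
    by (rule homeomorphic_map_compose)
  moreover have "preserves_restrictions \<theta> (H \<circ> K)"
    using K K_pts preserves_restrictions_H_comp by (simp add: IPS_embedding_def)
  ultimately show "H ` K ` pts \<theta> \<in> IPS \<theta>"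
    unfolding IPS_iff using HK by auto
qed

definition separated :: "(pt \<Rightarrow> nat \<Rightarrow> nat) \<Rightarrow> ord1 list \<Rightarrow> stage \<Rightarrow> bool" where
  "separated \<Phi> i W \<longleftrightarrow> (\<forall>z\<in>pts \<theta>. \<forall>w\<in>pts \<theta>. \<forall>x\<in>cyl \<theta> W z. \<forall>y\<in>cyl \<theta> W w. \<Phi> x \<noteq> H y i)"

lemma separated_refines: "separated \<Phi> i W \<Longrightarrow> refines \<theta> W W' \<Longrightarrow> separated \<Phi> i W'"
  unfolding separated_def using cyl_antimono by blast

text \<open>If z0 and w0 cannot be told apart below i, the mixed point has the same i-th coordinate under
  H as the point it copies; otherwise bit i of the mixed point is still free and can be flipped.\<close>

lemma separation_witnesses:
  assumes W: "approx \<theta> R W" and z0: "z0 \<in> pts \<theta>" and w0: "w0 \<in> pts \<theta>" and i: "i \<in> \<theta>"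
    and nd: "nowhere_locally_eq \<theta> \<Phi> (\<lambda>x. H x i)"
  shows "\<exists>x\<in>cyl \<theta> W z0. \<exists>y\<in>cyl \<theta> W w0. (\<forall>t. agree R z0 w0 t \<longrightarrow> x t = y t) \<and> \<Phi> x \<noteq> H y i"
proof -
  define mix where "mix x = (\<lambda>t. if agree R z0 w0 t then x t else cyl_pt \<theta> W w0 t)" for x :: pt
  have mix: "mix x \<in> cyl \<theta> W w0" if "x \<in> cyl \<theta> W z0" for x
    unfolding mix_def using cyl_mix[OF W z0 w0 that cyl_pt_in_cyl[OF W w0]] .
  have mix_agree: "\<forall>t. agree R z0 w0 t \<longrightarrow> x t = mix x t" for x
    by (simp add: mix_def)
  show ?thesis
  proof (cases "agree R z0 w0 i")
    case True
    have "openin (Dpow \<theta>) (cyl \<theta> W z0)" "cyl \<theta> W z0 \<noteq> {}"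
      using openin_cyl[OF W z0] cyl_nonempty[OF W z0] .
    then obtain x where x: "x \<in> cyl \<theta> W z0" "\<Phi> x \<noteq> H x i"
      using nd unfolding nowhere_locally_eq_def by blast
    have "mix x \<in> pts \<theta>" "x \<in> pts \<theta>"
      using x(1) mix[OF x(1)] cyl_subset by blast+
    then have "H (mix x) i = H x i"
      by (rule H_coord_local[OF i]) (use True agree_down in \<open>simp add: mix_def\<close>)
    then show ?thesis
      using x mix[OF x(1)] mix_agree[of x] by (intro bexI) auto
  next
    case False
    define x where "x = cyl_pt \<theta> W z0"
    have x: "x \<in> cyl \<theta> W z0"
      unfolding x_def by (rule cyl_pt_in_cyl[OF W z0])
    show ?thesis
    proof (cases "\<Phi> x = H (mix x) i")
      case True
      define y where "y = flip_bit (mix x) i (length (W w0 i))"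
      have "y \<in> cyl \<theta> W w0"
        unfolding y_def using flip_bit_in_cyl[OF mix[OF x] i] .
      moreover have "x t = y t" if "agree R z0 w0 t" for t
      proof -
        have "t \<noteq> i"
          using False that by blast
        then show ?thesis
          using that by (simp add: y_def flip_bit_other mix_def)
      qed
      moreover have "H y i \<noteq> H (mix x) i"
        unfolding y_def using H_coord_flip[OF i] mix[OF x] cyl_subset by blast
      ultimately show ?thesis
        using x True by (intro bexI) auto
    next
      case False
      then show ?thesis
        using x mix[OF x] mix_agree[of x] by (intro bexI) auto
    qed
  qed
qed

lemma separate_pair:
  assumes W: "approx \<theta> R W" and z0: "z0 \<in> pts \<theta>" and w0: "w0 \<in> pts \<theta>" and i: "i \<in> \<theta>"
    and \<Phi>: "continuous_map (Dpow \<theta>) euclidean \<Phi>" and nd: "nowhere_locally_eq \<theta> \<Phi> (\<lambda>x. H x i)"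
  shows "\<exists>W'. approx \<theta> R W' \<and> refines \<theta> W W' \<and> (\<forall>x\<in>cyl \<theta> W' z0. \<forall>y\<in>cyl \<theta> W' w0. \<Phi> x \<noteq> H y i)"
proof -
  obtain x y where x: "x \<in> cyl \<theta> W z0" and y: "y \<in> cyl \<theta> W w0"
    and xy: "\<forall>t. agree R z0 w0 t \<longrightarrow> x t = y t" and neq: "\<Phi> x \<noteq> H y i"
    using separation_witnesses[OF W z0 w0 i nd] by blast
  from neq obtain k where k: "\<Phi> x k \<noteq> H y i k"
    by (auto simp: fun_eq_iff)
  have "x \<in> pts \<theta>" "y \<in> pts \<theta>"
    using x y cyl_subset by blast+
  obtain C1 L1 where C1: "finite C1" "C1 \<subseteq> \<theta>"
    "\<forall>x'\<in>pts \<theta>. (\<forall>t\<in>C1. \<forall>q<L1. x' t q = x t q) \<longrightarrow> \<Phi> x' k = \<Phi> x k"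
    using continuous_map_bit_nbhd[OF \<Phi> \<open>x \<in> pts \<theta>\<close>, where k = k] by blast
  obtain C2 L2 where C2: "finite C2" "C2 \<subseteq> \<theta>"
    "\<forall>y'\<in>pts \<theta>. (\<forall>t\<in>C2. \<forall>q<L2. y' t q = y t q) \<longrightarrow> H y' i k = H y i k"
    using continuous_map_bit_nbhd[OF H_coord_continuous[OF i] \<open>y \<in> pts \<theta>\<close>, where k = k] by blast
  have C: "finite (C1 \<union> C2)" "C1 \<union> C2 \<subseteq> \<theta>"
    using C1(1,2) C2(1,2) by auto
  have xy: "\<And>t. agree R z0 w0 t \<Longrightarrow> x t = y t"
    using xy by blast
  obtain W' where W': "approx \<theta> R W'" "refines \<theta> W W'"
    and x': "\<forall>x'\<in>cyl \<theta> W' z0. \<forall>t\<in>C1 \<union> C2. \<forall>q<L1 + L2. x' t q = x t q"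
    and y': "\<forall>y'\<in>cyl \<theta> W' w0. \<forall>t\<in>C1 \<union> C2. \<forall>q<L1 + L2. y' t q = y t q"
    using approx_freeze[OF W x y xy C, of "L1 + L2"] by blast
  have "\<Phi> x' \<noteq> H y' i" if x'y': "x' \<in> cyl \<theta> W' z0" "y' \<in> cyl \<theta> W' w0" for x' y'
  proof -
    have "\<forall>t\<in>C1. \<forall>q<L1. x' t q = x t q"
      by (intro ballI allI impI x'[rule_format, OF x'y'(1)]) simp_all
    then have "\<Phi> x' k = \<Phi> x k"
      using C1(3) x'y'(1) cyl_subset by blast
    moreover have "\<forall>t\<in>C2. \<forall>q<L2. y' t q = y t q"
      by (intro ballI allI impI y'[rule_format, OF x'y'(2)]) simp_all
    then have "H y' i k = H y i k"
      using C2(3) x'y'(2) cyl_subset by blast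
    ultimately show ?thesis
      using k by auto
  qed
  then show ?thesis
    using W' by blast
qed

lemma separate_finite:
  assumes W: "approx \<theta> R W" and F: "finite F" "F \<subseteq> pts \<theta> \<times> pts \<theta>" and i: "i \<in> \<theta>"
    and \<Phi>: "continuous_map (Dpow \<theta>) euclidean \<Phi>" and nd: "nowhere_locally_eq \<theta> \<Phi> (\<lambda>x. H x i)"
  shows "\<exists>W'. approx \<theta> R W' \<and> refines \<theta> W W' \<and>
    (\<forall>(z, w)\<in>F. \<forall>x\<in>cyl \<theta> W' z. \<forall>y\<in>cyl \<theta> W' w. \<Phi> x \<noteq> H y i)"
  using F
proof (induction F rule: finite_induct)
  case empty
  then show ?case
    using W refines_refl by blast
next
  case (insert zw F)
  obtain z w where zw: "zw = (z, w)" "z \<in> pts \<theta>" "w \<in> pts \<theta>"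
    using insert.prems by auto
  obtain W1 where W1: "approx \<theta> R W1" "refines \<theta> W W1"
    "\<forall>(z, w)\<in>F. \<forall>x\<in>cyl \<theta> W1 z. \<forall>y\<in>cyl \<theta> W1 w. \<Phi> x \<noteq> H y i"
    using insert by blast
  obtain W2 where W2: "approx \<theta> R W2" "refines \<theta> W1 W2"
    "\<forall>x\<in>cyl \<theta> W2 z. \<forall>y\<in>cyl \<theta> W2 w. \<Phi> x \<noteq> H y i"
    using separate_pair[OF W1(1) zw(2,3) i \<Phi> nd] by blast
  have "\<forall>x\<in>cyl \<theta> W2 z'. \<forall>y\<in>cyl \<theta> W2 w'. \<Phi> x \<noteq> H y i" if "(z', w') \<in> F" for z' w'
  proof -
    have "cyl \<theta> W2 z' \<subseteq> cyl \<theta> W1 z'" "cyl \<theta> W2 w' \<subseteq> cyl \<theta> W1 w'"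
      using cyl_antimono[OF W2(2)] insert.prems that by auto
    then show ?thesis
      using W1(3) that by blast
  qed
  then have "\<forall>(z', w')\<in>insert zw F. \<forall>x\<in>cyl \<theta> W2 z'. \<forall>y\<in>cyl \<theta> W2 w'. \<Phi> x \<noteq> H y i"
    using W2(3) zw(1) by auto
  then show ?case
    using W2(1) refines_trans[OF W1(2) W2(2)] by blast
qed

lemma separate_all:
  assumes W: "approx \<theta> R W" and i: "i \<in> \<theta>"
    and \<Phi>: "continuous_map (Dpow \<theta>) euclidean \<Phi>" and nd: "nowhere_locally_eq \<theta> \<Phi> (\<lambda>x. H x i)"
  shows "\<exists>W'. approx \<theta> R W' \<and> refines \<theta> W W' \<and> separated \<Phi> i W'"
proof -
  have nodes: "\<forall>e\<in>R. fst e \<in> \<theta>"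
    using approx_nodes[OF W] by blast
  obtain F where F: "finite F" "F \<subseteq> pts \<theta>" "\<forall>z\<in>pts \<theta>. \<exists>v\<in>F. \<forall>t. agree R z v t"
    using finite_agree_representatives[OF approx_finite[OF W] nodes] by blast
  have FF: "finite (F \<times> F)" "F \<times> F \<subseteq> pts \<theta> \<times> pts \<theta>"
    using F(1,2) by auto
  obtain W' where W': "approx \<theta> R W'" "refines \<theta> W W'"
    and sep: "\<forall>(z, w)\<in>F \<times> F. \<forall>x\<in>cyl \<theta> W' z. \<forall>y\<in>cyl \<theta> W' w. \<Phi> x \<noteq> H y i"
    using separate_finite[OF W FF i \<Phi> nd] by blast
  have rep: "\<exists>v\<in>F. cyl \<theta> W' z = cyl \<theta> W' v" if z: "z \<in> pts \<theta>" for z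
  proof -
    obtain v where v: "v \<in> F" "\<forall>t. agree R z v t"
      using F(3) z by blast
    have "cyl \<theta> W' z = cyl \<theta> W' v"
      by (rule cyl_cong[OF W'(1) z]) (use v F(2) in auto)
    then show ?thesis
      using v(1) by blast
  qed
  have "\<Phi> x \<noteq> H y i"
    if zw: "z \<in> pts \<theta>" "w \<in> pts \<theta>" and xy: "x \<in> cyl \<theta> W' z" "y \<in> cyl \<theta> W' w" for z w x y
  proof -
    obtain v where v: "v \<in> F" "cyl \<theta> W' z = cyl \<theta> W' v"
      using rep[OF zw(1)] by blast
    obtain v' where v': "v' \<in> F" "cyl \<theta> W' w = cyl \<theta> W' v'"
      using rep[OF zw(2)] by blast
    have "(v, v') \<in> F \<times> F"
      using v(1) v'(1) by simp
    then have "\<forall>x\<in>cyl \<theta> W' v. \<forall>y\<in>cyl \<theta> W' v'. \<Phi> x \<noteq> H y i"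
      using sep by blast
    then show ?thesis
      using xy v(2) v'(2) by simp
  qed
  then have "separated \<Phi> i W'"
    unfolding separated_def by blast
  then show ?thesis
    using W' by blast
qed

lemma fusion_step:
  assumes W: "approx \<theta> (revealed e n) W" and e: "range e = \<theta>"
    and \<Phi>: "continuous_map (Dpow \<theta>) euclidean \<Phi>"
    and nd: "e n \<in> A \<Longrightarrow> nowhere_locally_eq \<theta> \<Phi> (\<lambda>x. H x (e n))"
  shows "\<exists>W'. approx \<theta> (revealed e (Suc n)) W' \<and> refines \<theta> W W' \<and>
    (e n \<in> A \<longrightarrow> separated \<Phi> (e n) W') \<and>
    (\<forall>z\<in>pts \<theta>. \<forall>k\<le>n. length (W z (e k)) < length (W' z (e k)))"
proof -
  obtain W1 where W1: "approx \<theta> (revealed e n) W1" "refines \<theta> W W1"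
    "e n \<in> A \<longrightarrow> separated \<Phi> (e n) W1"
  proof (cases "e n \<in> A")
    case True
    have "e n \<in> \<theta>"
      using e by blast
    then show ?thesis
      using separate_all[OF W _ \<Phi> nd[OF True]] that by blast
  next
    case False
    then show ?thesis
      using that[OF W refines_refl] by blast
  qed
  have T: "finite (e ` {..n})" "e ` {..n} \<subseteq> \<theta>"
    using e by auto
  define W2 where "W2 z t = W1 z t @ (if t \<in> e ` {..n} then map (z t) [0..<Suc n] else [])" for z t
  have "revealed e n \<union> e ` {..n} \<times> {..n} = revealed e (Suc n)"
    by (auto simp: revealed_def lessThan_Suc_atMost)
  then have "approx \<theta> (revealed e (Suc n)) W2"
    using approx_reveal[OF Xi W1(1) T, of n] unfolding W2_def by simp
  moreover have "refines \<theta> W1 W2"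
    unfolding W2_def by (rule refines_append)
  moreover have "length (W z (e k)) < length (W2 z (e k))" if "z \<in> pts \<theta>" "k \<le> n" for z k
    using refines_length[OF W1(2) that(1), of "e k"] that(2) by (simp add: W2_def)
  ultimately show ?thesis
    using W1 refines_trans[OF W1(2)] separated_refines by blast
qed

lemma fusion_sequence:
  assumes W0: "approx \<theta> {} W0" and e: "range e = \<theta>"
    and \<Phi>: "continuous_map (Dpow \<theta>) euclidean \<Phi>"
    and nd: "\<And>i. i \<in> A \<Longrightarrow> nowhere_locally_eq \<theta> \<Phi> (\<lambda>x. H x i)"
  shows "\<exists>Ws. fusion \<theta> e Ws \<and> refines \<theta> W0 (Ws 0) \<and> (\<forall>n. e n \<in> A \<longrightarrow> separated \<Phi> (e n) (Ws (Suc n)))"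
proof -
  define P where "P n W \<longleftrightarrow> approx \<theta> (revealed e n) W \<and> refines \<theta> W0 W" for n W
  define Q where "Q n W W' \<longleftrightarrow> refines \<theta> W W' \<and> (e n \<in> A \<longrightarrow> separated \<Phi> (e n) W') \<and>
      (\<forall>z\<in>pts \<theta>. \<forall>k\<le>n. length (W z (e k)) < length (W' z (e k)))" for n W W'
  have "P 0 W0"
    using W0 refines_refl by (simp add: P_def revealed_def)
  moreover have step: "\<exists>W'. P (Suc n) W' \<and> Q n W W'" if PW: "P n W" for W n
  proof -
    have W: "approx \<theta> (revealed e n) W" "refines \<theta> W0 W"
      using PW by (simp_all add: P_def)
    obtain W' where "approx \<theta> (revealed e (Suc n)) W'" "refines \<theta> W W'"
      "e n \<in> A \<longrightarrow> separated \<Phi> (e n) W'"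
      "\<forall>z\<in>pts \<theta>. \<forall>k\<le>n. length (W z (e k)) < length (W' z (e k))"
      using fusion_step[OF W(1) e \<Phi> nd[of "e n"]] by blast
    moreover have "refines \<theta> W0 W'"
      using refines_trans[OF W(2) \<open>refines \<theta> W W'\<close>] .
    ultimately show ?thesis
      unfolding P_def Q_def by blast
  qed
  ultimately obtain Ws where "\<forall>n. P n (Ws n) \<and> Q n (Ws n) (Ws (Suc n))"
    using dependent_nat_choice[of P Q] by blast
  then have Ws: "\<And>n. approx \<theta> (revealed e n) (Ws n)" "\<And>n. refines \<theta> (Ws n) (Ws (Suc n))"
    "\<And>n. e n \<in> A \<longrightarrow> separated \<Phi> (e n) (Ws (Suc n))" "refines \<theta> W0 (Ws 0)"
    "\<And>n z k. z \<in> pts \<theta> \<Longrightarrow> k \<le> n \<Longrightarrow> length (Ws n z (e k)) < length (Ws (Suc n) z (e k))"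
    unfolding P_def Q_def by blast+
  have "fusion \<theta> e Ws"
    by (unfold_locales; rule Xi e Ws)
  then show ?thesis
    using Ws(3,4) by blast
qed

lemma IPS_embedding_avoiding:
  assumes U: "openin (Dpow \<theta>) U" "U \<noteq> {}" and \<Phi>: "continuous_map (Dpow \<theta>) euclidean \<Phi>"
    and A: "A \<subseteq> \<theta>" and nd: "\<And>i. i \<in> A \<Longrightarrow> nowhere_locally_eq \<theta> \<Phi> (\<lambda>x. H x i)"
  shows "\<exists>K. IPS_embedding \<theta> K \<and> (\<forall>z\<in>pts \<theta>. K z \<in> U) \<and>
    (\<forall>i\<in>A. \<forall>z\<in>pts \<theta>. \<forall>w\<in>pts \<theta>. \<Phi> (K z) \<noteq> H (K w) i)"
proof (cases "\<theta> = {}")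
  case True
  then have "pts \<theta> = {\<lambda>_. undefined}"
    by (simp add: topspace_Dpow)
  then have "\<forall>z\<in>pts \<theta>. id z \<in> U"
    using U openin_subset by fastforce
  then show ?thesis
    using IPS_embedding_id A True by blast
next
  case False
  define e where "e = from_nat_into \<theta>"
  have e: "range e = \<theta>"
    unfolding e_def using False Xi by (simp add: Xi_def range_from_nat_into)
  obtain x0 where "x0 \<in> U"
    using U(2) by blast
  then obtain W0 where W0: "approx \<theta> {} W0" and W0_U: "\<forall>z. cyl \<theta> W0 z \<subseteq> U"
    using approx_inside_open[OF U(1)] by blast
  obtain Ws where fus: "fusion \<theta> e Ws" and Ws0: "refines \<theta> W0 (Ws 0)"
    and sep: "\<forall>n. e n \<in> A \<longrightarrow> separated \<Phi> (e n) (Ws (Suc n))"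
    using fusion_sequence[OF W0 e \<Phi> nd] by blast
  interpret fusion \<theta> e Ws
    by (rule fus)
  have "limit z \<in> U" if "z \<in> pts \<theta>" for z
    using limit_in_cyl[OF that, of 0] cyl_antimono[OF Ws0 that] W0_U by blast
  moreover have "\<Phi> (limit z) \<noteq> H (limit w) i"
    if i: "i \<in> A" and zw: "z \<in> pts \<theta>" "w \<in> pts \<theta>" for i z w
  proof -
    obtain n where "e n = i"
      using i A e by blast
    then have "separated \<Phi> i (Ws (Suc n))"
      using sep i by blast
    then show ?thesis
      using limit_in_cyl zw unfolding separated_def by blast
  qed
  ultimately show ?thesis
    using IPS_embedding_limit by blast
qed

lemma IPS_subset_avoiding:
  assumes F: "continuous_map (Dpow \<theta>) euclidean F"
    and nd: "\<And>i. i \<in> \<theta> \<Longrightarrow> nowhere_locally_eq \<theta> (F \<circ> H) (\<lambda>x. H x i)"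
  shows "\<exists>Y\<in>IPS \<theta>. Y \<subseteq> X \<and> (\<forall>i\<in>\<theta>. \<forall>y\<in>Y. F y \<notin> proj_at Y i)"
proof -
  have "restrict (\<lambda>_ _. 0) \<theta> \<in> pts \<theta>"
    by (simp add: mem_pts_iff)
  then have "pts \<theta> \<noteq> {}"
    by blast
  then obtain K where K: "IPS_embedding \<theta> K"
    and sep: "\<forall>i\<in>\<theta>. \<forall>z\<in>pts \<theta>. \<forall>w\<in>pts \<theta>. (F \<circ> H) (K z) \<noteq> H (K w) i"
    using IPS_embedding_avoiding[OF openin_topspace _ continuous_map_compose[OF H_continuous F]
        subset_refl nd] by blast
  have "F y \<noteq> y' i" if "i \<in> \<theta>" "y \<in> H ` K ` pts \<theta>" "y' \<in> H ` K ` pts \<theta>" for i y y'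
    using sep that by auto
  then show ?thesis
    using IPS_image_embedding[OF K] unfolding proj_at_def by blast
qed

lemma IPS_subset_copying:
  assumes j: "j \<in> \<theta>" and U: "openin (Dpow \<theta>) U" "U \<noteq> {}" and FU: "\<forall>x\<in>U. F (H x) = H x j"
  shows "\<exists>Y\<in>IPS \<theta>. Y \<subseteq> X \<and> (\<forall>y\<in>Y. F y = y j) \<and>
    (\<forall>i\<in>\<theta>. i \<noteq> j \<longrightarrow> (\<forall>y\<in>Y. F y \<notin> proj_at Y i))"
proof -
  have "nowhere_locally_eq \<theta> (\<lambda>x. H x j) (\<lambda>x. H x i)" if "i \<in> \<theta> - {j}" for i
    using nowhere_locally_eq_H_coords[OF _ j] that by blast
  then obtain K where K: "IPS_embedding \<theta> K" "\<forall>z\<in>pts \<theta>. K z \<in> U"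
    and sep: "\<forall>i\<in>\<theta> - {j}. \<forall>z\<in>pts \<theta>. \<forall>w\<in>pts \<theta>. H (K z) j \<noteq> H (K w) i"
    using IPS_embedding_avoiding[OF U H_coord_continuous[OF j] Diff_subset] by blast
  define Y where "Y = H ` K ` pts \<theta>"
  have copy: "F (H (K z)) = H (K z) j" if "z \<in> pts \<theta>" for z
    using that K(2) FU by blast
  then have "\<forall>y\<in>Y. F y = y j"
    unfolding Y_def by blast
  moreover have "F y \<notin> proj_at Y i" if i: "i \<in> \<theta>" "i \<noteq> j" and y: "y \<in> Y" for i y
  proof
    assume "F y \<in> proj_at Y i"
    then obtain w where w: "w \<in> pts \<theta>" "F y = H (K w) i"
      unfolding proj_at_def Y_def by blast
    obtain z where z: "z \<in> pts \<theta>" "y = H (K z)"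
      using y unfolding Y_def by blast
    have "H (K z) j \<noteq> H (K w) i"
      using sep i z(1) w(1) by blast
    then show False
      using copy[OF z(1)] z(2) w(2) by simp
  qed
  moreover have "Y \<in> IPS \<theta>" "Y \<subseteq> X"
    unfolding Y_def by (rule IPS_image_embedding[OF K(1)])+
  ultimately show ?thesis
    by blast
qed

end

theorem theorem3p17:
  fixes \<theta> :: "ord1 list set"
    and X :: "(ord1 list \<Rightarrow> nat \<Rightarrow> nat) set"
    and F :: "(ord1 list \<Rightarrow> nat \<Rightarrow> nat) \<Rightarrow> (nat \<Rightarrow> nat)"
  assumes "\<theta> \<in> Xi"
    and "X \<in> IPS \<theta>"
    and "continuous_map (Dpow \<theta>) euclidean F"
  shows "\<exists>Y\<in>IPS \<theta>. Y \<subseteq> X \<and>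
    ((\<forall>i\<in>\<theta>. \<forall>y\<in>Y. F y \<notin> proj_at Y i) \<or>
     (\<exists>j\<in>\<theta>. (\<forall>y\<in>Y. F y = y j) \<and>
        (\<forall>i\<in>\<theta>. i \<noteq> j \<longrightarrow> (\<forall>y\<in>Y. F y \<notin> proj_at Y i))))"
proof -
  obtain H where H: "homeomorphic_map (Dpow \<theta>) (subtopology (Dpow \<theta>) X) H"
    "preserves_restrictions \<theta> H"
    using assms(2) unfolding IPS_iff by blast
  interpret IPS_param \<theta> X H
    by (rule IPS_param.intro[OF assms(1) H])
  show ?thesis
  proof (cases "\<exists>j\<in>\<theta>. \<exists>U. openin (Dpow \<theta>) U \<and> U \<noteq> {} \<and> (\<forall>x\<in>U. F (H x) = H x j)")
    case True
    then obtain j U where j: "j \<in> \<theta>" and U: "openin (Dpow \<theta>) U" "U \<noteq> {}" "\<forall>x\<in>U. F (H x) = H x j"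
      by blast
    show ?thesis
      using IPS_subset_copying[OF j U] j by blast
  next
    case False
    then have "nowhere_locally_eq \<theta> (F \<circ> H) (\<lambda>x. H x i)" if "i \<in> \<theta>" for i
      using that by (auto simp: nowhere_locally_eq_def)
    then show ?thesis
      using IPS_subset_avoiding[OF assms(3)] by blast
  qed
qed

end
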